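(* Let $M\subset AG_k(n)$ be the set of fibers of a skew fibration of $\mathbb R^n$ by oriented affine $k$-planes. Then $M$ is topologically closed in $AG_k(n)$. Moreover, if $(u_n,v_n)\in M$ is a sequence with no accumulation point in $M$, then $|v_n|\to\infty$.
   Context: $AG_k(n)$ is the manifold of oriented affine $k$-planes in $\mathbb R^n$; a plane is written as $(u,v)$ where $u$ is the parallel oriented linear $k$-plane and $v\in u^\perp$ is the point of the plane nearest to the origin. A fibration of $\mathbb R^n$ by oriented affine $k$-planes is a family of pairwise disjoint oriented affine $k$-planes covering $\mathbb R^n$ such that the map sending a point to its fiber is continuous; it is skew if no two distinct fibers contain parallel lines. *)

theory Defs
  imports "HOL-Analysis.Analysis"
begin

text \<open>An oriented linear k-plane in R^n is represented by its Pluecker vector: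
  for an orthonormal k-frame F (rows F$i), the function sending an index map
  sigma : 'k => 'n to the k x k minor det (F$i$(sigma j)).  This is the standard
  (injective, topological) Pluecker embedding of the oriented Grassmannian.\<close>

definition orthonormal_frame :: "real^'n^'k \<Rightarrow> bool" where
  "orthonormal_frame F \<longleftrightarrow> (\<forall>i j. F$i \<bullet> F$j = (if i = j then 1 else 0))"

definition pluecker :: "real^'n^'k \<Rightarrow> (('k \<Rightarrow> 'n) \<Rightarrow> real)" where
  "pluecker F = (\<lambda>\<sigma>. det ((\<chi> i j. F$i$(\<sigma> j)) :: real^'k^'k))"

type_synonym ('n, 'k) agplane = "(('k \<Rightarrow> 'n) \<Rightarrow> real) \<times> (real^'n)"

definition AG :: "('n::finite, 'k::finite) agplane set" where
  "AG = {(pluecker F, v) | F v. orthonormal_frame F \<and> (\<forall>i. F$i \<bullet> v = 0)}"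

definition lin_part :: "('n::finite, 'k::finite) agplane \<Rightarrow> (real^'n) set" where
  "lin_part a = {d. \<exists>F::real^'n^'k. orthonormal_frame F \<and> pluecker F = fst a
                    \<and> d \<in> span (range (\<lambda>i. F$i))}"

definition points :: "('n::finite, 'k::finite) agplane \<Rightarrow> (real^'n) set" where
  "points a = {x. x - snd a \<in> lin_part a}"

definition fiber_map :: "('n::finite, 'k::finite) agplane set \<Rightarrow> real^'n \<Rightarrow> ('n, 'k) agplane" where
  "fiber_map M x = (THE a. a \<in> M \<and> x \<in> points a)"

definition is_fibration :: "('n::finite, 'k::finite) agplane set \<Rightarrow> bool" where
  "is_fibration M \<longleftrightarrow> M \<subseteq> AG
     \<and> (\<forall>a\<in>M. \<forall>b\<in>M. a \<noteq> b \<longrightarrow> points a \<inter> points b = {})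
     \<and> (\<forall>x. \<exists>a\<in>M. x \<in> points a)
     \<and> continuous_on UNIV (fiber_map M)"

text \<open>Skew: no two distinct fibers contain parallel lines, i.e. their
  linear parts share no nonzero direction.\<close>
definition is_skew_fibration :: "('n::finite, 'k::finite) agplane set \<Rightarrow> bool" where
  "is_skew_fibration M \<longleftrightarrow> is_fibration M
     \<and> (\<forall>a\<in>M. \<forall>b\<in>M. a \<noteq> b \<longrightarrow> lin_part a \<inter> lin_part b \<subseteq> {0})"

end

theory Submission
  imports Defs
begin

text \<open>A plane (u,v) of a fibration
  is the fiber through its own point v, so the fibration is the set of planes p in AG fixed
  by p \<mapsto> fiber_map M (snd p), which is closed. If the points v_j of a sequence of fibers
  stay bounded along a subsequence, a further subsequence v_j converges to some x, and by
  continuity the fibers themselves converge to the fiber through x.\<close>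

lemma snd_in_points:
  assumes "a \<in> AG"
  shows "snd a \<in> points a"
proof -
  from assms obtain F v where "orthonormal_frame F" "a = (pluecker F, v)"
    unfolding AG_def by auto
  then show ?thesis
    unfolding points_def lin_part_def by (auto intro: span_0)
qed

lemma fiber_map_eqI:
  assumes "is_fibration M" "a \<in> M" "x \<in> points a"
  shows "fiber_map M x = a"
proof -
  have "b = a" if "b \<in> M" "x \<in> points b" for b
    using assms that unfolding is_fibration_def by blast
  then show ?thesis
    unfolding fiber_map_def using assms(2,3) by (intro the_equality) blast+
qed

lemma fiber_map_in:
  assumes "is_fibration M"
  shows "fiber_map M x \<in> M"
proof -
  obtain a where "a \<in> M" "x \<in> points a"
    using assms unfolding is_fibration_def by blast
  then show ?thesis using fiber_map_eqI[OF assms] by simp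
qed

lemma fiber_map_snd:
  assumes "is_fibration M" "a \<in> M"
  shows "fiber_map M (snd a) = a"
proof -
  have "a \<in> AG" using assms unfolding is_fibration_def by blast
  then show ?thesis using assms by (intro fiber_map_eqI snd_in_points)
qed

lemma fibration_eq_fixed_planes:
  assumes "is_fibration M"
  shows "M = AG \<inter> {p. fiber_map M (snd p) = p}"
proof
  show "M \<subseteq> AG \<inter> {p. fiber_map M (snd p) = p}"
    using assms fiber_map_snd by (auto simp: is_fibration_def)
  show "AG \<inter> {p. fiber_map M (snd p) = p} \<subseteq> M"
    using fiber_map_in[OF assms] by (metis (mono_tags, lifting) Int_Collect subsetI)
qed

lemma closedin_fibration:
  assumes "is_fibration M"
  shows "closedin (top_of_set AG) M"
proof -
  have cont: "continuous_on UNIV (fiber_map M)"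
    using assms unfolding is_fibration_def by simp
  have "closed {p. fiber_map M (snd p) = p}"
    by (intro closed_Collect_eq continuous_on_compose2[OF cont] continuous_intros) auto
  then show ?thesis
    by (subst fibration_eq_fixed_planes[OF assms]) (simp add: closedin_closed_Int)
qed

lemma convergent_subsequence_if_not_norm_tendsto_at_top:
  fixes f :: "nat \<Rightarrow> 'a::{heine_borel,real_normed_vector}"
  assumes "\<not> filterlim (\<lambda>j. norm (f j)) at_top sequentially"
  obtains l r where "strict_mono r" "(f \<circ> r) \<longlonglongrightarrow> l"
proof -
  from assms obtain B where "\<not> eventually (\<lambda>j. B \<le> norm (f j)) sequentially"
    unfolding filterlim_at_top by blast
  then have "frequently (\<lambda>j. norm (f j) < B) sequentially"
    by (simp add: frequently_def not_less)
  then have "infinite {j. norm (f j) < B}"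
    by (simp add: frequently_cofinite cofinite_eq_sequentially[symmetric])
  then obtain r :: "nat \<Rightarrow> nat"
    where r: "strict_mono r" "\<forall>j. r j \<in> {j. norm (f j) < B}"
    using infinite_enumerate by blast
  have "bounded (range (f \<circ> r))"
    unfolding bounded_iff using r(2) by (auto intro: less_imp_le)
  then obtain l r' where r': "strict_mono r'" "(f \<circ> r \<circ> r') \<longlonglongrightarrow> l"
    using bounded_imp_convergent_subsequence by metis
  have "strict_mono (r \<circ> r')"
    using r(1) r'(1) by (rule strict_mono_o)
  moreover have "(f \<circ> (r \<circ> r')) \<longlonglongrightarrow> l"
    using r'(2) by (simp add: o_assoc)
  ultimately show ?thesis by (rule that)
qed

lemma fibration_norm_tendsto_at_top:
  assumes "is_fibration M" and s: "\<And>j. s j \<in> M"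
    and no_acc: "\<not> (\<exists>p\<in>M. \<exists>r. strict_mono r \<and> (s \<circ> r) \<longlonglongrightarrow> p)"
  shows "filterlim (\<lambda>j. norm (snd (s j))) at_top sequentially"
proof (rule ccontr)
  assume "\<not> ?thesis"
  then obtain x r where r: "strict_mono r" "((\<lambda>j. snd (s j)) \<circ> r) \<longlonglongrightarrow> x"
    by (rule convergent_subsequence_if_not_norm_tendsto_at_top)
  have cont: "continuous_on UNIV (fiber_map M)"
    using assms(1) unfolding is_fibration_def by simp
  have "(\<lambda>j. fiber_map M (snd (s (r j)))) \<longlonglongrightarrow> fiber_map M x"
    using continuous_on_tendsto_compose[OF cont r(2)] by (simp add: o_def)
  then have "(s \<circ> r) \<longlonglongrightarrow> fiber_map M x"
    using fiber_map_snd[OF assms(1) s] by (simp add: o_def)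
  then show False
    using no_acc r(1) fiber_map_in[OF assms(1)] by blast
qed

theorem lemma3p2:
  fixes M :: "('n::finite, 'k::finite) agplane set"
  assumes "is_skew_fibration M"
  shows "closedin (top_of_set AG) M \<and>
         (\<forall>s :: nat \<Rightarrow> ('n, 'k) agplane.
           (\<forall>j. s j \<in> M) \<and>
           \<not> (\<exists>p\<in>M. \<exists>r. strict_mono r \<and> (s \<circ> r) \<longlonglongrightarrow> p) \<longrightarrow>
           filterlim (\<lambda>j. norm (snd (s j))) at_top sequentially)"
proof -
  have "is_fibration M"
    using assms unfolding is_skew_fibration_def by simp
  then show ?thesis
    using closedin_fibration fibration_norm_tendsto_at_top by blast
qed

end
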